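(* Consider the binary adder MAC and, for $\alpha\in[0,\frac12]$, the auxiliary channel $p_\alpha(u|y)$ from $\mathcal Y=\{0,1,2\}$ to $\mathcal U=\{0,1\}$ with $p_\alpha(0|0)=1-\alpha$, $p_\alpha(1|0)=\alpha$, $p_\alpha(0|1)=p_\alpha(1|1)=\frac12$, $p_\alpha(1|2)=1-\alpha$, $p_\alpha(0|2)=\alpha$. For bit-pipe capacities $C_1,C_2\ge0$, consider the optimization $$\max_{p(x_1,x_2)}\ \min_{0\le\alpha\le\frac12}\ \min\left\{\begin{array}{l} C_1+C_2,\\ C_1+I(X_2;Y|X_1),\\ C_2+I(X_1;Y|X_2),\\ I(X_1X_2;Y),\\ \tfrac12\big(C_1+C_2+I(X_1X_2;Y|U)+I(X_1;U|X_2)+I(X_2;U|X_1)\big)\end{array}\right\}$$ over pmfs $p(x_1,x_2)$ on $\{0,1\}^2$, with quantities evaluated for $p(x_1,x_2)p(y|x_1,x_2)p_\alpha(u|y)$. Then there is an optimizing $p(x_1,x_2)$ that is a doubly symmetric binary source.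
   Context: The binary adder MAC has $\mathcal X_1=\mathcal X_2=\{0,1\}$, $\mathcal Y=\{0,1,2\}$ and $Y=X_1+X_2$ (deterministically). A pair $(X_1,X_2)$ is a doubly symmetric binary source with parameter $p$ if $p(0,0)=p(1,1)=\frac{1-p}{2}$ and $p(0,1)=p(1,0)=\frac p2$. Logarithms base 2. *)

theory Defs
  imports Complex_Main
begin

text \<open>Finite-alphabet entropy of a function f of a random variable Z with pmf P on finite support S
  (log base 2, convention 0 log 0 = 0).\<close>
definition ent :: "('z \<Rightarrow> real) \<Rightarrow> 'z set \<Rightarrow> ('z \<Rightarrow> 'v) \<Rightarrow> real" where
  "ent P S f = - (\<Sum>v\<in>f ` S. let q = (\<Sum>z\<in>{z\<in>S. f z = v}. P z) in
                     (if q = 0 then 0 else q * log 2 q))"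

definition cmi :: "('z \<Rightarrow> real) \<Rightarrow> 'z set \<Rightarrow> ('z \<Rightarrow> 'a) \<Rightarrow> ('z \<Rightarrow> 'b) \<Rightarrow> ('z \<Rightarrow> 'c) \<Rightarrow> real" where
  "cmi P S A B C = ent P S (\<lambda>z. (A z, C z)) + ent P S (\<lambda>z. (B z, C z))
                   - ent P S (\<lambda>z. (A z, B z, C z)) - ent P S C"

definition mi :: "('z \<Rightarrow> real) \<Rightarrow> 'z set \<Rightarrow> ('z \<Rightarrow> 'a) \<Rightarrow> ('z \<Rightarrow> 'b) \<Rightarrow> real" where
  "mi P S A B = cmi P S A B (\<lambda>z. ())"

text \<open>A pmf p(x1,x2) on {0,1}^2 (values outside {0,1}^2 are irrelevant).\<close>
definition is_pmf2 :: "(nat \<Rightarrow> nat \<Rightarrow> real) \<Rightarrow> bool" where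
  "is_pmf2 p \<longleftrightarrow> (\<forall>a\<in>{0,1}. \<forall>b\<in>{0,1}. p a b \<ge> 0) \<and> p 0 0 + p 0 1 + p 1 0 + p 1 1 = 1"

definition dsbs :: "(nat \<Rightarrow> nat \<Rightarrow> real) \<Rightarrow> bool" where
  "dsbs p \<longleftrightarrow> (\<exists>r::real. p 0 0 = (1 - r) / 2 \<and> p 1 1 = (1 - r) / 2 \<and> p 0 1 = r / 2 \<and> p 1 0 = r / 2)"

definition chan :: "real \<Rightarrow> nat \<Rightarrow> nat \<Rightarrow> real" where
  "chan \<alpha> y u =
     (if y = 0 then (if u = 0 then 1 - \<alpha> else if u = 1 then \<alpha> else 0)
      else if y = 1 then (if u \<in> {0,1} then 1/2 else 0)
      else if y = 2 then (if u = 1 then 1 - \<alpha> else if u = 0 then \<alpha> else 0)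
      else 0)"

definition SS :: "(nat \<times> nat \<times> nat \<times> nat) set" where
  "SS = {0,1} \<times> {0,1} \<times> {0,1,2} \<times> {0,1}"

definition joint :: "(nat \<Rightarrow> nat \<Rightarrow> real) \<Rightarrow> real \<Rightarrow> nat \<times> nat \<times> nat \<times> nat \<Rightarrow> real" where
  "joint p \<alpha> z = (case z of (x1, x2, y, u) \<Rightarrow>
       p x1 x2 * (if y = x1 + x2 then 1 else 0) * chan \<alpha> y u)"

definition X1 :: "nat \<times> nat \<times> nat \<times> nat \<Rightarrow> nat" where "X1 z = fst z"
definition X2 :: "nat \<times> nat \<times> nat \<times> nat \<Rightarrow> nat" where "X2 z = fst (snd z)"
definition Yv :: "nat \<times> nat \<times> nat \<times> nat \<Rightarrow> nat" where "Yv z = fst (snd (snd z))"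
definition Uv :: "nat \<times> nat \<times> nat \<times> nat \<Rightarrow> nat" where "Uv z = snd (snd (snd z))"

definition inner_obj :: "real \<Rightarrow> real \<Rightarrow> (nat \<Rightarrow> nat \<Rightarrow> real) \<Rightarrow> real \<Rightarrow> real" where
  "inner_obj C1 C2 p \<alpha> = (let P = joint p \<alpha> in
     min (C1 + C2)
      (min (C1 + cmi P SS X2 Yv X1)
       (min (C2 + cmi P SS X1 Yv X2)
        (min (mi P SS (\<lambda>z. (X1 z, X2 z)) Yv)
         ((C1 + C2 + cmi P SS (\<lambda>z. (X1 z, X2 z)) Yv Uv
               + cmi P SS X1 Uv X2 + cmi P SS X2 Uv X1) / 2)))))"

definition obj :: "real \<Rightarrow> real \<Rightarrow> (nat \<Rightarrow> nat \<Rightarrow> real) \<Rightarrow> real" where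
  "obj C1 C2 p = (INF \<alpha>\<in>{0..1/2}. inner_obj C1 C2 p \<alpha>)"

end

theory Submission
  imports Defs "HOL-Analysis.Analysis" "HOL-Real_Asymp.Real_Asymp"
begin

text \<open>
  The flip (x1, x2, y, u) \<mapsto> (1 - x1, 1 - x2, 2 - y, 1 - u) maps the adder MAC and every channel
  p_\<alpha> to themselves, so the objective is unchanged when p(x1,x2) is replaced by
  p(1 - x1, 1 - x2). On the support of the joint law Y is a function of (X1, X2), so each term of
  the inner minimum is a conditional entropy of Y or U, hence concave in p(x1,x2), minus the
  quantity H(U|X1X2), which is linear in p(x1,x2) and flip invariant. Averaging p with its flip
  can therefore only increase the objective, and the average is a doubly symmetric binary source.
  Finally the objective restricted to these sources, an infimum of continuous functions of the
  parameter, is upper semicontinuous and attains its maximum on [0, 1].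
\<close>

section \<open>Entropy of a finite partition\<close>

definition xlogx :: "real \<Rightarrow> real" where
  "xlogx q = q * log 2 q"

definition fiber_mass :: "('z \<Rightarrow> real) \<Rightarrow> 'z set \<Rightarrow> ('z \<Rightarrow> 'v) \<Rightarrow> 'v \<Rightarrow> real" where
  "fiber_mass P S f v = (\<Sum>z\<in>{z\<in>S. f z = v}. P z)"

lemma xlogx_0 [simp]: "xlogx 0 = 0"
  by (simp add: xlogx_def)

lemma xlogx_mult: "x \<ge> 0 \<Longrightarrow> y \<ge> 0 \<Longrightarrow> xlogx (x * y) = y * xlogx x + x * xlogx y"
  by (cases "x = 0"; cases "y = 0") (auto simp: xlogx_def log_mult algebra_simps)

lemma ent_eq_sum_xlogx: "ent P S f = - (\<Sum>v\<in>f ` S. xlogx (fiber_mass P S f v))"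
  unfolding ent_def xlogx_def fiber_mass_def Let_def
  by (intro arg_cong[where f=uminus] sum.cong) auto

lemma ent_eq_sum_xlogx_superset:
  assumes "finite V" "f ` S \<subseteq> V"
  shows "ent P S f = - (\<Sum>v\<in>V. xlogx (fiber_mass P S f v))"
proof -
  have "fiber_mass P S f v = 0" if "v \<notin> f ` S" for v
    unfolding fiber_mass_def using that by (intro sum.neutral) auto
  then show ?thesis
    unfolding ent_eq_sum_xlogx using assms by (intro arg_cong[where f=uminus] sum.mono_neutral_left) auto
qed

lemma ent_cong: "(\<And>z. z \<in> S \<Longrightarrow> P z = Q z) \<Longrightarrow> ent P S f = ent Q S f"
  unfolding ent_eq_sum_xlogx fiber_mass_def
  by (intro arg_cong[where f=uminus] sum.cong refl arg_cong[where f=xlogx]) auto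

lemma ent_cong_partition:
  assumes "\<And>z z'. z \<in> S \<Longrightarrow> z' \<in> S \<Longrightarrow> f z = f z' \<longleftrightarrow> g z = g z'"
  shows "ent P S f = ent P S g"
proof -
  define \<psi> where "\<psi> v = g (SOME z. z \<in> S \<and> f z = v)" for v
  have \<psi>: "\<psi> (f z) = g z" if "z \<in> S" for z
  proof -
    have "\<exists>z'. z' \<in> S \<and> f z' = f z"
      using that by blast
    then have "(SOME z'. z' \<in> S \<and> f z' = f z) \<in> S \<and> f (SOME z'. z' \<in> S \<and> f z' = f z) = f z"
      by (rule someI_ex)
    then show ?thesis unfolding \<psi>_def using assms that by blast
  qed
  have inj: "inj_on \<psi> (f ` S)"
    by (auto simp: inj_on_def \<psi> assms)
  have img: "g ` S = \<psi> ` f ` S"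
    by (auto simp: \<psi> image_iff)
  have "fiber_mass P S g (\<psi> v) = fiber_mass P S f v" if "v \<in> f ` S" for v
  proof -
    from that obtain z0 where "z0 \<in> S" "v = f z0" by blast
    then have "{z\<in>S. g z = \<psi> v} = {z\<in>S. f z = v}" using \<psi> assms by auto
    then show ?thesis unfolding fiber_mass_def by simp
  qed
  then show ?thesis
    unfolding ent_eq_sum_xlogx img sum.reindex[OF inj] by (simp add: comp_def)
qed

lemma ent_restrict_support:
  assumes "finite S"
  shows "ent P S f = ent P {z\<in>S. P z \<noteq> 0} f"
proof -
  let ?S = "{z\<in>S. P z \<noteq> 0}"
  have mass: "fiber_mass P S f v = fiber_mass P ?S f v" for v
    unfolding fiber_mass_def using assms by (intro sum.mono_neutral_right) auto
  have "fiber_mass P ?S f v = 0" if "v \<notin> f ` ?S" for v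
    unfolding fiber_mass_def using that by (intro sum.neutral) auto
  then have "(\<Sum>v\<in>f ` S. xlogx (fiber_mass P S f v)) = (\<Sum>v\<in>f ` ?S. xlogx (fiber_mass P ?S f v))"
    unfolding mass using assms by (intro sum.mono_neutral_right) auto
  then show ?thesis unfolding ent_eq_sum_xlogx by simp
qed

lemma ent_reindex_bij:
  assumes "bij_betw \<pi> S S"
  shows "ent (\<lambda>z. P (\<pi> z)) S (\<lambda>z. f (\<pi> z)) = ent P S f"
proof -
  have img: "(\<lambda>z. f (\<pi> z)) ` S = f ` S"
    using assms by (metis bij_betw_imp_surj_on image_image)
  have "fiber_mass (\<lambda>z. P (\<pi> z)) S (\<lambda>z. f (\<pi> z)) v = fiber_mass P S f v" for v
  proof -
    have inj: "inj_on \<pi> {z\<in>S. f (\<pi> z) = v}"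
      using assms by (auto simp: bij_betw_def inj_on_def)
    have "\<pi> ` {z\<in>S. f (\<pi> z) = v} = {z\<in>S. f z = v}"
      using assms by (auto simp: bij_betw_def)
    then show ?thesis
      unfolding fiber_mass_def using sum.reindex[OF inj, of P] by (simp add: comp_def)
  qed
  then show ?thesis unfolding ent_eq_sum_xlogx img by simp
qed

definition cond_ent :: "('z \<Rightarrow> real) \<Rightarrow> 'z set \<Rightarrow> ('z \<Rightarrow> 'a) \<Rightarrow> ('z \<Rightarrow> 'b) \<Rightarrow> real" where
  "cond_ent P S f g = ent P S (\<lambda>z. (f z, g z)) - ent P S g"

lemma cmi_eq_cond_ent_diff:
  "cmi P S A B C = cond_ent P S B C - cond_ent P S B (\<lambda>z. (A z, C z))"
proof -
  have "ent P S (\<lambda>z. (A z, B z, C z)) = ent P S (\<lambda>z. (B z, A z, C z))"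
    by (rule ent_cong_partition) auto
  then show ?thesis unfolding cmi_def cond_ent_def by simp
qed

lemma cmi_eq_cond_ent_if_determined:
  assumes "finite S"
    and det: "\<And>z z'. z \<in> S \<Longrightarrow> z' \<in> S \<Longrightarrow> P z \<noteq> 0 \<Longrightarrow> P z' \<noteq> 0 \<Longrightarrow>
      A z = A z' \<Longrightarrow> C z = C z' \<Longrightarrow> B z = B z'"
  shows "cmi P S A B C = cond_ent P S B C"
proof -
  have "ent P S (\<lambda>z. (A z, B z, C z)) = ent P {z\<in>S. P z \<noteq> 0} (\<lambda>z. (A z, B z, C z))"
    by (rule ent_restrict_support[OF assms(1)])
  also have "\<dots> = ent P {z\<in>S. P z \<noteq> 0} (\<lambda>z. (A z, C z))"
    by (rule ent_cong_partition) (use det in auto)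
  also have "\<dots> = ent P S (\<lambda>z. (A z, C z))"
    by (rule ent_restrict_support[OF assms(1), symmetric])
  finally show ?thesis unfolding cmi_def cond_ent_def by simp
qed

section \<open>Concavity of conditional entropy\<close>

definition kl_term :: "real \<Rightarrow> real \<Rightarrow> real" where
  "kl_term x m = x * ln (x / m)"

lemma log_sum_inequality_pos:
  fixes a1 a2 b1 b2 :: real
  assumes "a1 > 0" "a2 > 0" "b1 > 0" "b2 > 0"
  shows "kl_term (a1 + a2) (b1 + b2) \<le> kl_term a1 b1 + kl_term a2 b2"
proof -
  let ?A = "a1 + a2" and ?B = "b1 + b2"
  have tangent: "a * ln (a / b) - a * ln (?A / ?B) \<ge> a - b * ?A / ?B" if "a > 0" "b > 0" for a b
  proof -
    have "ln (b * ?A / (a * ?B)) \<le> b * ?A / (a * ?B) - 1"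
      using that assms by (intro ln_le_minus_one) auto
    moreover have "ln (b * ?A / (a * ?B)) = - (ln (a / b) - ln (?A / ?B))"
      using that assms by (simp add: ln_div ln_mult)
    ultimately have "a * (ln (a / b) - ln (?A / ?B)) \<ge> a * (1 - b * ?A / (a * ?B))"
      using that by (intro mult_left_mono) auto
    moreover have "a * (1 - b * ?A / (a * ?B)) = a - b * ?A / ?B"
      using that by (simp add: right_diff_distrib)
    ultimately show ?thesis by (simp add: algebra_simps)
  qed
  have "a1 - b1 * ?A / ?B + (a2 - b2 * ?A / ?B) = 0"
    using assms by (simp add: field_simps)
  then have "a1 * ln (?A / ?B) + a2 * ln (?A / ?B) \<le> a1 * ln (a1 / b1) + a2 * ln (a2 / b2)"
    using tangent[of a1 b1] tangent[of a2 b2] assms by linarith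
  then show ?thesis unfolding kl_term_def by (simp add: distrib_right)
qed

lemma log_sum_inequality:
  fixes a1 a2 b1 b2 :: real
  assumes "a1 \<ge> 0" "a2 \<ge> 0" "b1 \<ge> 0" "b2 \<ge> 0" "a1 > 0 \<Longrightarrow> b1 > 0" "a2 > 0 \<Longrightarrow> b2 > 0"
  shows "kl_term (a1 + a2) (b1 + b2) \<le> kl_term a1 b1 + kl_term a2 b2"
proof (cases "a1 = 0 \<or> a2 = 0")
  case True
  then consider "a1 = 0" "a2 = 0" | "a1 = 0" "a2 > 0" | "a1 > 0" "a2 = 0"
    using assms by fastforce
  then show ?thesis
  proof cases
    case 2
    then have "ln (a2 / (b1 + b2)) \<le> ln (a2 / b2)"
      using assms by (auto intro: divide_left_mono)
    then show ?thesis using 2 by (simp add: kl_term_def mult_left_mono)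
  next
    case 3
    then have "ln (a1 / (b1 + b2)) \<le> ln (a1 / b1)"
      using assms by (auto intro: divide_left_mono)
    then show ?thesis using 3 by (simp add: kl_term_def mult_left_mono)
  qed (simp add: kl_term_def)
next
  case False
  then show ?thesis using assms by (intro log_sum_inequality_pos) auto
qed

definition jensen_gap :: "real \<Rightarrow> real \<Rightarrow> real" where
  "jensen_gap x y = xlogx ((x + y) / 2) - (xlogx x + xlogx y) / 2"

lemma jensen_gap_eq_kl_term:
  fixes x y :: real
  assumes "x \<ge> 0" "y \<ge> 0"
  shows "jensen_gap x y = - (kl_term x ((x + y) / 2) + kl_term y ((x + y) / 2)) / (2 * ln 2)"
proof -
  have kl: "kl_term a ((x + y) / 2) = a * ln a - a * ln ((x + y) / 2)" if "a \<in> {x, y}" for a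
    using that assms by (cases "a = 0") (auto simp: kl_term_def ln_div ln_mult algebra_simps)
  have kx: "kl_term x ((x + y) / 2) = x * ln x - x * ln ((x + y) / 2)"
    and ky: "kl_term y ((x + y) / 2) = y * ln y - y * ln ((x + y) / 2)"
    by (rule kl; simp)+
  show ?thesis
    unfolding jensen_gap_def kx ky by (simp add: xlogx_def log_def field_simps)
qed

text \<open>The Jensen gap is a negative multiple of the Jensen-Shannon divergence; its superadditivity
  is the log-sum inequality applied twice.\<close>

lemma jensen_gap_superadditive:
  fixes x1 y1 x2 y2 :: real
  assumes "x1 \<ge> 0" "y1 \<ge> 0" "x2 \<ge> 0" "y2 \<ge> 0"
  shows "jensen_gap x1 y1 + jensen_gap x2 y2 \<le> jensen_gap (x1 + x2) (y1 + y2)"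
proof -
  let ?A = "kl_term x1 ((x1 + y1) / 2) + kl_term y1 ((x1 + y1) / 2)"
  let ?B = "kl_term x2 ((x2 + y2) / 2) + kl_term y2 ((x2 + y2) / 2)"
  let ?T = "kl_term (x1 + x2) ((x1 + x2 + (y1 + y2)) / 2) + kl_term (y1 + y2) ((x1 + x2 + (y1 + y2)) / 2)"
  have mean: "(x1 + y1) / 2 + (x2 + y2) / 2 = (x1 + x2 + (y1 + y2)) / 2"
    by (simp add: field_simps)
  have "?T \<le> ?A + ?B"
    using log_sum_inequality[of x1 x2 "(x1 + y1) / 2" "(x2 + y2) / 2"]
      log_sum_inequality[of y1 y2 "(x1 + y1) / 2" "(x2 + y2) / 2"] assms
    unfolding mean by auto
  then have "- (?A + ?B) / (2 * ln 2) \<le> - ?T / (2 * ln 2)"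
    by (intro divide_right_mono) auto
  moreover have "jensen_gap (x1 + x2) (y1 + y2) = - ?T / (2 * ln 2)"
    using assms by (intro jensen_gap_eq_kl_term) auto
  ultimately show ?thesis
    unfolding jensen_gap_eq_kl_term[OF assms(1,2)] jensen_gap_eq_kl_term[OF assms(3,4)]
      minus_add_distrib add_divide_distrib by simp
qed

lemma jensen_gap_sum_le:
  assumes "finite A" "\<And>a. a \<in> A \<Longrightarrow> u a \<ge> 0 \<and> v a \<ge> (0::real)"
  shows "(\<Sum>a\<in>A. jensen_gap (u a) (v a)) \<le> jensen_gap (\<Sum>a\<in>A. u a) (\<Sum>a\<in>A. v a)"
  using assms
proof (induction A rule: finite_induct)
  case empty
  then show ?case by (simp add: jensen_gap_def)
next
  case (insert x F)
  then have "(\<Sum>a\<in>insert x F. jensen_gap (u a) (v a))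
      \<le> jensen_gap (u x) (v x) + jensen_gap (\<Sum>a\<in>F. u a) (\<Sum>a\<in>F. v a)"
    by simp
  also have "\<dots> \<le> jensen_gap (u x + (\<Sum>a\<in>F. u a)) (v x + (\<Sum>a\<in>F. v a))"
    using insert by (intro jensen_gap_superadditive) (auto intro: sum_nonneg)
  finally show ?case using insert by simp
qed

lemma cond_ent_eq_sum_fibers:
  fixes f :: "'z \<Rightarrow> 'a" and g :: "'z \<Rightarrow> 'b"
  assumes "finite S"
  defines "W \<equiv> (\<lambda>z. (f z, g z)) ` S"
  shows "cond_ent P S f g =
    (\<Sum>c\<in>g ` S. xlogx (\<Sum>w\<in>{w\<in>W. snd w = c}. fiber_mass P S (\<lambda>z. (f z, g z)) w)
               - (\<Sum>w\<in>{w\<in>W. snd w = c}. xlogx (fiber_mass P S (\<lambda>z. (f z, g z)) w)))"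
proof -
  let ?m = "fiber_mass P S (\<lambda>z. (f z, g z))"
  have "finite W" unfolding W_def using assms by simp
  have marginal: "fiber_mass P S g c = (\<Sum>w\<in>{w\<in>W. snd w = c}. ?m w)" for c
  proof -
    have "fiber_mass P S g c = (\<Sum>w\<in>{w\<in>W. snd w = c}. sum P {z\<in>{z\<in>S. g z = c}. (f z, g z) = w})"
      unfolding fiber_mass_def using assms \<open>finite W\<close>
      by (intro sum.group[symmetric]) (auto simp: W_def)
    also have "\<dots> = (\<Sum>w\<in>{w\<in>W. snd w = c}. ?m w)"
      unfolding fiber_mass_def by (intro sum.cong refl arg_cong[where f="sum P"]) auto
    finally show ?thesis .
  qed
  have "(\<Sum>w\<in>W. xlogx (?m w)) = (\<Sum>c\<in>g ` S. \<Sum>w\<in>{w\<in>W. snd w = c}. xlogx (?m w))"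
    using assms \<open>finite W\<close> by (intro sum.group[symmetric]) (auto simp: W_def)
  then show ?thesis
    unfolding cond_ent_def ent_eq_sum_xlogx W_def[symmetric] marginal by (simp add: sum_subtractf)
qed

lemma cond_ent_midpoint_concave:
  assumes "finite S" "\<And>z. z \<in> S \<Longrightarrow> P z \<ge> 0" "\<And>z. z \<in> S \<Longrightarrow> Q z \<ge> 0"
  shows "cond_ent P S f g + cond_ent Q S f g \<le> 2 * cond_ent (\<lambda>z. (P z + Q z) / 2) S f g"
proof -
  define W where "W = (\<lambda>z. (f z, g z)) ` S"
  define u where "u = fiber_mass P S (\<lambda>z. (f z, g z))"
  define v where "v = fiber_mass Q S (\<lambda>z. (f z, g z))"
  let ?Wc = "\<lambda>c. {w\<in>W. snd w = c}"
  have mid: "fiber_mass (\<lambda>z. (P z + Q z) / 2) S (\<lambda>z. (f z, g z)) w = (u w + v w) / 2" for w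
    unfolding u_def v_def fiber_mass_def by (simp only: sum_divide_distrib[symmetric] sum.distrib)
  have "u w \<ge> 0" "v w \<ge> 0" for w
    unfolding u_def v_def fiber_mass_def using assms by (auto intro: sum_nonneg)
  moreover have "finite (?Wc c)" for c
    unfolding W_def using assms by simp
  ultimately have gap: "(\<Sum>w\<in>?Wc c. jensen_gap (u w) (v w))
      \<le> jensen_gap (\<Sum>w\<in>?Wc c. u w) (\<Sum>w\<in>?Wc c. v w)" for c
    by (intro jensen_gap_sum_le) auto
  have fiber: "(xlogx (\<Sum>w\<in>?Wc c. u w) - (\<Sum>w\<in>?Wc c. xlogx (u w)))
      + (xlogx (\<Sum>w\<in>?Wc c. v w) - (\<Sum>w\<in>?Wc c. xlogx (v w)))
     \<le> 2 * (xlogx (\<Sum>w\<in>?Wc c. (u w + v w) / 2) - (\<Sum>w\<in>?Wc c. xlogx ((u w + v w) / 2)))" for c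
  proof -
    have mean: "(\<Sum>w\<in>?Wc c. (u w + v w) / 2) = ((\<Sum>w\<in>?Wc c. u w) + (\<Sum>w\<in>?Wc c. v w)) / 2"
      by (simp only: sum_divide_distrib[symmetric] sum.distrib)
    have gap_sum: "(\<Sum>w\<in>?Wc c. jensen_gap (u w) (v w)) = (\<Sum>w\<in>?Wc c. xlogx ((u w + v w) / 2))
        - ((\<Sum>w\<in>?Wc c. xlogx (u w)) + (\<Sum>w\<in>?Wc c. xlogx (v w))) / 2"
      unfolding jensen_gap_def sum_subtractf by (simp only: sum_divide_distrib[symmetric] sum.distrib)
    show ?thesis using gap[of c] unfolding gap_sum mean unfolding jensen_gap_def by argo
  qed
  have "cond_ent P S f g + cond_ent Q S f g
     = (\<Sum>c\<in>g ` S. (xlogx (\<Sum>w\<in>?Wc c. u w) - (\<Sum>w\<in>?Wc c. xlogx (u w)))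
                  + (xlogx (\<Sum>w\<in>?Wc c. v w) - (\<Sum>w\<in>?Wc c. xlogx (v w))))"
    unfolding cond_ent_eq_sum_fibers[OF assms(1)] u_def v_def W_def by (simp add: sum.distrib)
  also have "\<dots> \<le> (\<Sum>c\<in>g ` S. 2 * (xlogx (\<Sum>w\<in>?Wc c. (u w + v w) / 2)
                                    - (\<Sum>w\<in>?Wc c. xlogx ((u w + v w) / 2))))"
    by (intro sum_mono fiber)
  also have "\<dots> = 2 * cond_ent (\<lambda>z. (P z + Q z) / 2) S f g"
    unfolding cond_ent_eq_sum_fibers[OF assms(1)] W_def[symmetric] mid by (simp add: sum_distrib_left)
  finally show ?thesis .
qed

section \<open>Continuity\<close>

lemma continuous_on_xlogx: "continuous_on {0..} xlogx"
proof -
  have "continuous (at x within {0..}) (\<lambda>x. x * ln x)" if "x \<in> {0..}" for x :: real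
  proof (cases "x = 0")
    case True
    have "((\<lambda>x::real. x * ln x) \<longlongrightarrow> 0) (at_right 0)" by real_asymp
    then show ?thesis unfolding True continuous_within at_within_Ici_at_right by simp
  next
    case False
    then have "continuous (at x) (\<lambda>x. x * ln x)"
      using that by (intro continuous_intros) auto
    then show ?thesis by (rule continuous_at_imp_continuous_at_within)
  qed
  then have "continuous_on {0..} (\<lambda>x::real. x * ln x)"
    unfolding continuous_on_eq_continuous_within by blast
  then have "continuous_on {0..} (\<lambda>x::real. x * ln x / ln 2)"
    by (rule continuous_on_divide[OF _ continuous_on_const]) simp
  then show ?thesis by (simp add: xlogx_def log_def)
qed

lemma continuous_on_ent:
  assumes "finite S" "\<And>z. z \<in> S \<Longrightarrow> continuous_on T (\<lambda>t. P t z)"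
    "\<And>t z. t \<in> T \<Longrightarrow> z \<in> S \<Longrightarrow> P t z \<ge> 0"
  shows "continuous_on T (\<lambda>t. ent (P t) S f)"
proof -
  have "continuous_on T (\<lambda>t. xlogx (fiber_mass (P t) S f v))" for v
  proof (rule continuous_on_compose2[OF continuous_on_xlogx])
    show "continuous_on T (\<lambda>t. fiber_mass (P t) S f v)"
      unfolding fiber_mass_def using assms by (intro continuous_on_sum) auto
    show "(\<lambda>t. fiber_mass (P t) S f v) ` T \<subseteq> {0..}"
      unfolding fiber_mass_def using assms by (auto intro!: sum_nonneg)
  qed
  then show ?thesis
    unfolding ent_eq_sum_xlogx by (intro continuous_intros)
qed

text \<open>An infimum of continuous functions is upper semicontinuous, hence attains its maximum on a
  compact set.\<close>

lemma compact_attains_sup_INF: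
  fixes F :: "'a::metric_space \<Rightarrow> 'b \<Rightarrow> real"
  assumes "compact K" "K \<noteq> {}" "A \<noteq> {}"
    and cont: "\<And>a. a \<in> A \<Longrightarrow> continuous_on K (\<lambda>r. F r a)"
    and bdd: "\<And>r. r \<in> K \<Longrightarrow> bdd_below (F r ` A)"
  shows "\<exists>r\<in>K. \<forall>s\<in>K. (INF a\<in>A. F s a) \<le> (INF a\<in>A. F r a)"
proof -
  define G where "G s = (INF a\<in>A. F s a)" for s
  obtain a0 where a0: "a0 \<in> A" using assms(3) by blast
  have G_le: "G s \<le> F s a" if "s \<in> K" "a \<in> A" for s a
    unfolding G_def by (rule cINF_lower[OF bdd[OF that(1)] that(2)])
  have "bounded ((\<lambda>r. F r a0) ` K)"
    by (intro compact_imp_bounded compact_continuous_image cont a0 assms(1))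
  then have "bdd_above ((\<lambda>r. F r a0) ` K)"
    by (rule bounded_imp_bdd_above)
  then obtain B where B: "\<And>r. r \<in> K \<Longrightarrow> F r a0 \<le> B"
    by (auto simp: bdd_above_def)
  have bdd_G: "bdd_above (G ` K)"
    using B G_le[OF _ a0] by (intro bdd_aboveI2[where M=B]) (meson order_trans)
  define M where "M = (SUP s\<in>K. G s)"
  have "\<forall>n. \<exists>s\<in>K. M - 1 / Suc n < G s"
  proof
    fix n :: nat
    have "M - 1 / Suc n < M" by simp
    then show "\<exists>s\<in>K. M - 1 / Suc n < G s"
      unfolding M_def using less_cSUP_iff[OF assms(2) bdd_G] by blast
  qed
  then obtain s where s: "\<And>n. s n \<in> K" "\<And>n. M - 1 / Suc n < G (s n)" by metis
  then have "\<forall>n. s n \<in> K" by blast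
  then obtain l h where l: "l \<in> K" "strict_mono h" "(s \<circ> h) \<longlonglongrightarrow> l"
    using seq_compactE[OF compact_imp_seq_compact[OF assms(1)]] by blast
  have "M \<le> F l a" if a: "a \<in> A" for a
  proof (rule LIMSEQ_le)
    show "(\<lambda>n. F ((s \<circ> h) n) a) \<longlonglongrightarrow> F l a"
      by (rule continuous_on_tendsto_compose[OF cont[OF a] l(3) l(1)]) (use s(1) in auto)
    have "(\<lambda>n. 1 / real (Suc n)) \<longlonglongrightarrow> 0"
      using LIMSEQ_inverse_real_of_nat by (simp add: inverse_eq_divide)
    from tendsto_diff[OF tendsto_const this, of M]
    show "(\<lambda>n. M - 1 / Suc n) \<longlonglongrightarrow> M" by simp
    show "\<exists>N. \<forall>n\<ge>N. M - 1 / Suc n \<le> F ((s \<circ> h) n) a"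
    proof (intro exI allI impI)
      fix n
      have "1 / real (Suc (h n)) \<le> 1 / Suc n"
        using seq_suble[OF l(2)] by (intro divide_left_mono) auto
      then show "M - 1 / Suc n \<le> F ((s \<circ> h) n) a"
        using s(2)[of "h n"] G_le[OF s(1)[of "h n"] a] by simp
    qed
  qed
  then have "M \<le> G l" unfolding G_def by (rule cINF_greatest[OF assms(3)])
  moreover have "G s' \<le> M" if "s' \<in> K" for s'
    unfolding M_def by (rule cSUP_upper[OF that bdd_G])
  ultimately have "\<forall>s'\<in>K. G s' \<le> G l" by fastforce
  with l(1) show ?thesis unfolding G_def by blast
qed

section \<open>Symmetry of the adder MAC\<close>

lemma finite_SS: "finite SS"
  by (simp add: SS_def)

lemma SS_bounds: "z \<in> SS \<Longrightarrow> X1 z \<le> 1 \<and> X2 z \<le> 1 \<and> Yv z \<le> 2 \<and> Uv z \<le> 1"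
  by (auto simp: SS_def X1_def X2_def Yv_def Uv_def)

definition bit_flip :: "nat \<times> nat \<times> nat \<times> nat \<Rightarrow> nat \<times> nat \<times> nat \<times> nat" where
  "bit_flip z = (1 - X1 z, 1 - X2 z, 2 - Yv z, 1 - Uv z)"

definition flip_pmf :: "(nat \<Rightarrow> nat \<Rightarrow> real) \<Rightarrow> nat \<Rightarrow> nat \<Rightarrow> real" where
  "flip_pmf p a b = p (1 - a) (1 - b)"

lemma bij_bit_flip: "bij_betw bit_flip SS SS"
  by (rule bij_betw_byWitness[where f'=bit_flip])
    (auto simp: SS_def bit_flip_def X1_def X2_def Yv_def Uv_def)

lemma joint_flip_pmf:
  assumes "z \<in> SS"
  shows "joint (flip_pmf p) \<alpha> z = joint p \<alpha> (bit_flip z)"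
proof -
  obtain x1 x2 y u where z: "z = (x1, x2, y, u)" "x1 \<le> 1" "x2 \<le> 1" "y \<le> 2" "u \<le> 1"
    using SS_bounds[OF assms] by (cases z) (auto simp: X1_def X2_def Yv_def Uv_def)
  have "chan \<alpha> (2 - y) (1 - u) = chan \<alpha> y u"
    using z by (auto simp: chan_def)
  moreover have "2 - y = (1 - x1) + (1 - x2) \<longleftrightarrow> y = x1 + x2"
    using z by auto
  ultimately show ?thesis
    by (simp add: z joint_def flip_pmf_def bit_flip_def X1_def X2_def Yv_def Uv_def)
qed

definition flip_compatible :: "(nat \<times> nat \<times> nat \<times> nat \<Rightarrow> 'a) \<Rightarrow> bool" where
  "flip_compatible f \<longleftrightarrow> (\<forall>z\<in>SS. \<forall>z'\<in>SS. f (bit_flip z) = f (bit_flip z') \<longleftrightarrow> f z = f z')"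

lemma flip_compatible_pair [simp]:
  "flip_compatible f \<Longrightarrow> flip_compatible g \<Longrightarrow> flip_compatible (\<lambda>z. (f z, g z))"
  unfolding flip_compatible_def by simp

lemma flip_compatible_unit [simp]: "flip_compatible (\<lambda>z. ())"
  unfolding flip_compatible_def by simp

lemma flip_compatible_coordinates [simp]:
  "flip_compatible X1" "flip_compatible X2" "flip_compatible Yv" "flip_compatible Uv"
  unfolding flip_compatible_def bit_flip_def
  by (auto dest!: SS_bounds simp: X1_def X2_def Yv_def Uv_def)

lemma ent_joint_flip_pmf:
  assumes "flip_compatible f"
  shows "ent (joint (flip_pmf p) \<alpha>) SS f = ent (joint p \<alpha>) SS f"
proof -
  have "ent (joint (flip_pmf p) \<alpha>) SS f = ent (\<lambda>z. joint p \<alpha> (bit_flip z)) SS f"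
    by (intro ent_cong joint_flip_pmf)
  also have "\<dots> = ent (\<lambda>z. joint p \<alpha> (bit_flip z)) SS (\<lambda>z. f (bit_flip z))"
    by (rule ent_cong_partition) (use assms in \<open>auto simp: flip_compatible_def\<close>)
  also have "\<dots> = ent (joint p \<alpha>) SS f"
    by (rule ent_reindex_bij[OF bij_bit_flip])
  finally show ?thesis .
qed

section \<open>Symmetrization increases the objective\<close>

definition symmetrize :: "(nat \<Rightarrow> nat \<Rightarrow> real) \<Rightarrow> nat \<Rightarrow> nat \<Rightarrow> real" where
  "symmetrize p a b = (p a b + flip_pmf p a b) / 2"

lemma is_pmf2_flip_pmf: "is_pmf2 p \<Longrightarrow> is_pmf2 (flip_pmf p)"
  by (auto simp: is_pmf2_def flip_pmf_def)

lemma joint_nonneg: "is_pmf2 q \<Longrightarrow> 0 \<le> \<alpha> \<Longrightarrow> \<alpha> \<le> 1 \<Longrightarrow> z \<in> SS \<Longrightarrow> joint q \<alpha> z \<ge> 0"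
  by (auto simp: is_pmf2_def SS_def joint_def chan_def)

lemma joint_symmetrize: "joint (symmetrize p) \<alpha> z = (joint p \<alpha> z + joint (flip_pmf p) \<alpha> z) / 2"
  by (auto simp: joint_def symmetrize_def field_simps split: prod.splits)

lemma cond_ent_le_symmetrize:
  assumes "is_pmf2 p" "0 \<le> \<alpha>" "\<alpha> \<le> 1" "flip_compatible f" "flip_compatible g"
  shows "cond_ent (joint p \<alpha>) SS f g \<le> cond_ent (joint (symmetrize p) \<alpha>) SS f g"
proof -
  have "cond_ent (joint p \<alpha>) SS f g + cond_ent (joint (flip_pmf p) \<alpha>) SS f g
      \<le> 2 * cond_ent (joint (symmetrize p) \<alpha>) SS f g"
    unfolding joint_symmetrize using assms is_pmf2_flip_pmf
    by (intro cond_ent_midpoint_concave finite_SS joint_nonneg) auto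
  moreover have "cond_ent (joint (flip_pmf p) \<alpha>) SS f g = cond_ent (joint p \<alpha>) SS f g"
    using assms(4,5) by (simp add: cond_ent_def ent_joint_flip_pmf)
  ultimately show ?thesis by simp
qed

text \<open>\<open>H(U|X1X2)\<close> enters the objective with a minus sign, so concavity would not suffice here;
  it is in fact linear in \<open>p(x1,x2)\<close>.\<close>

definition chan_ent :: "real \<Rightarrow> nat \<Rightarrow> real" where
  "chan_ent \<alpha> y = - (\<Sum>u\<in>{0,1}. xlogx (chan \<alpha> y u))"

lemma cond_ent_Uv_X1X2:
  assumes "is_pmf2 q" "0 \<le> \<alpha>" "\<alpha> \<le> 1"
  shows "cond_ent (joint q \<alpha>) SS Uv (\<lambda>z. (X1 z, X2 z))
    = (\<Sum>a\<in>{0,1}. \<Sum>b\<in>{0,1}. q a b * chan_ent \<alpha> (a + b))"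
proof -
  let ?B = "{0,1::nat} \<times> {0,1::nat}"
  let ?P = "joint q \<alpha>"
  let ?m2 = "fiber_mass ?P SS (\<lambda>z. (X1 z, X2 z))"
  let ?m3 = "fiber_mass ?P SS (\<lambda>z. (Uv z, X1 z, X2 z))"
  have SS_sum: "sum F SS = (\<Sum>x1\<in>{0,1}. \<Sum>x2\<in>{0,1}. \<Sum>y\<in>{0,1,2}. \<Sum>u\<in>{0,1}. F (x1, x2, y, u))"
    for F :: "_ \<Rightarrow> real"
    unfolding SS_def by (simp add: sum.cartesian_product add.assoc)
  have mass2: "?m2 (a, b) = q a b" if "(a, b) \<in> ?B" for a b
    using that by (auto simp: fiber_mass_def sum.inter_filter[OF finite_SS] SS_sum joint_def chan_def
        X1_def X2_def algebra_simps)
  have mass3: "?m3 (u, a, b) = q a b * chan \<alpha> (a + b) u" if "u \<in> {0,1}" "(a, b) \<in> ?B" for u a b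
    using that by (auto simp: fiber_mass_def sum.inter_filter[OF finite_SS] SS_sum joint_def chan_def
        X1_def X2_def Uv_def)
  have per_input: "(\<Sum>u\<in>{0,1}. xlogx (?m3 (u, w)))
      = xlogx (q (fst w) (snd w)) - q (fst w) (snd w) * chan_ent \<alpha> (fst w + snd w)"
    if "w \<in> ?B" for w
  proof -
    obtain a b where w: "w = (a, b)" "(a, b) \<in> ?B" using \<open>w \<in> ?B\<close> by (cases w) auto
    have q: "q a b \<ge> 0" and total: "chan \<alpha> (a + b) 0 + chan \<alpha> (a + b) 1 = 1"
      using w assms by (auto simp: is_pmf2_def chan_def)
    have "chan \<alpha> (a + b) u \<ge> 0" for u
      using assms by (simp add: chan_def)
    with q have "(\<Sum>u\<in>{0,1}. xlogx (q a b * chan \<alpha> (a + b) u))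
        = xlogx (q a b) * (chan \<alpha> (a + b) 0 + chan \<alpha> (a + b) 1) - q a b * chan_ent \<alpha> (a + b)"
      by (simp add: xlogx_mult chan_ent_def algebra_simps)
    with total w show ?thesis by (simp add: mass3)
  qed
  have "ent ?P SS (\<lambda>z. (Uv z, X1 z, X2 z)) = - (\<Sum>v\<in>{0,1} \<times> ?B. xlogx (?m3 v))"
    by (rule ent_eq_sum_xlogx_superset) (auto simp: SS_def X1_def X2_def Uv_def)
  also have "\<dots> = - (\<Sum>u\<in>{0,1}. \<Sum>w\<in>?B. xlogx (?m3 (u, w)))"
    by (simp only: sum.cartesian_product')
  also have "\<dots> = - (\<Sum>w\<in>?B. \<Sum>u\<in>{0,1}. xlogx (?m3 (u, w)))"
    by (subst sum.swap) (rule refl)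
  also have "\<dots> = - (\<Sum>w\<in>?B. xlogx (q (fst w) (snd w)) - q (fst w) (snd w) * chan_ent \<alpha> (fst w + snd w))"
    by (intro arg_cong[where f=uminus] sum.cong refl per_input)
  finally have ent3: "ent ?P SS (\<lambda>z. (Uv z, X1 z, X2 z))
      = (\<Sum>a\<in>{0,1}. \<Sum>b\<in>{0,1}. q a b * chan_ent \<alpha> (a + b)) - (\<Sum>a\<in>{0,1}. \<Sum>b\<in>{0,1}. xlogx (q a b))"
    by (simp only: sum_subtractf sum.cartesian_product' fst_conv snd_conv minus_diff_eq)
  have "ent ?P SS (\<lambda>z. (X1 z, X2 z)) = - (\<Sum>w\<in>?B. xlogx (?m2 w))"
    by (rule ent_eq_sum_xlogx_superset) (auto simp: SS_def X1_def X2_def)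
  also have "\<dots> = - (\<Sum>a\<in>{0,1}. \<Sum>b\<in>{0,1}. xlogx (q a b))"
    by (simp only: sum.cartesian_product') (simp add: mass2)
  finally show ?thesis
    using ent3 unfolding cond_ent_def by simp
qed

lemma cond_ent_Uv_X1X2_symmetrize:
  assumes "is_pmf2 p" "0 \<le> \<alpha>" "\<alpha> \<le> 1"
  shows "cond_ent (joint (symmetrize p) \<alpha>) SS Uv (\<lambda>z. (X1 z, X2 z))
    = cond_ent (joint p \<alpha>) SS Uv (\<lambda>z. (X1 z, X2 z))"
proof -
  have "is_pmf2 (symmetrize p)"
    using assms(1) by (auto simp: is_pmf2_def symmetrize_def flip_pmf_def field_simps)
  moreover have "chan_ent \<alpha> 2 = chan_ent \<alpha> 0"
    by (simp add: chan_ent_def chan_def)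
  ultimately show ?thesis
    using assms by (simp add: cond_ent_Uv_X1X2 symmetrize_def flip_pmf_def numeral_2_eq_2 field_simps)
qed

text \<open>Each term is a conditional entropy because \<open>Y = X1 + X2\<close> on the support of the joint law.\<close>

lemma adder_information_terms:
  fixes q \<alpha>
  defines "P \<equiv> joint q \<alpha>"
  shows "cmi P SS X2 Yv X1 = cond_ent P SS Yv X1"
    and "cmi P SS X1 Yv X2 = cond_ent P SS Yv X2"
    and "mi P SS (\<lambda>z. (X1 z, X2 z)) Yv = cond_ent P SS Yv (\<lambda>z. ())"
    and "cmi P SS (\<lambda>z. (X1 z, X2 z)) Yv Uv = cond_ent P SS Yv Uv"
    and "cmi P SS X1 Uv X2 = cond_ent P SS Uv X2 - cond_ent P SS Uv (\<lambda>z. (X1 z, X2 z))"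
    and "cmi P SS X2 Uv X1 = cond_ent P SS Uv X1 - cond_ent P SS Uv (\<lambda>z. (X1 z, X2 z))"
proof -
  have adder: "P z \<noteq> 0 \<Longrightarrow> Yv z = X1 z + X2 z" for z
    unfolding P_def joint_def X1_def X2_def Yv_def by (auto split: prod.splits if_splits)
  show "cmi P SS X2 Yv X1 = cond_ent P SS Yv X1"
    "cmi P SS X1 Yv X2 = cond_ent P SS Yv X2"
    "cmi P SS (\<lambda>z. (X1 z, X2 z)) Yv Uv = cond_ent P SS Yv Uv"
    by (rule cmi_eq_cond_ent_if_determined[OF finite_SS]; simp add: adder)+
  show "mi P SS (\<lambda>z. (X1 z, X2 z)) Yv = cond_ent P SS Yv (\<lambda>z. ())"
    unfolding mi_def by (rule cmi_eq_cond_ent_if_determined[OF finite_SS]) (simp add: adder)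
  show "cmi P SS X1 Uv X2 = cond_ent P SS Uv X2 - cond_ent P SS Uv (\<lambda>z. (X1 z, X2 z))"
    by (rule cmi_eq_cond_ent_diff)
  have "ent P SS (\<lambda>z. (Uv z, X2 z, X1 z)) = ent P SS (\<lambda>z. (Uv z, X1 z, X2 z))"
    "ent P SS (\<lambda>z. (X2 z, X1 z)) = ent P SS (\<lambda>z. (X1 z, X2 z))"
    by (rule ent_cong_partition; auto)+
  then show "cmi P SS X2 Uv X1 = cond_ent P SS Uv X1 - cond_ent P SS Uv (\<lambda>z. (X1 z, X2 z))"
    unfolding cmi_eq_cond_ent_diff by (simp add: cond_ent_def)
qed

lemma inner_obj_le_symmetrize:
  assumes "is_pmf2 p" "0 \<le> \<alpha>" "\<alpha> \<le> 1"
  shows "inner_obj C1 C2 p \<alpha> \<le> inner_obj C1 C2 (symmetrize p) \<alpha>"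
proof -
  note le = cond_ent_le_symmetrize[OF assms]
  show ?thesis
    unfolding inner_obj_def Let_def adder_information_terms cond_ent_Uv_X1X2_symmetrize[OF assms]
    by (intro min.mono add_left_mono add_mono divide_right_mono diff_right_mono order.refl le) simp_all
qed

section \<open>Attaining the maximum over symmetric sources\<close>

lemma continuous_on_chan: "continuous_on T (\<lambda>\<alpha>. chan \<alpha> y u)"
proof -
  define c0 where "c0 = chan 0 y u"
  define c1 where "c1 = chan 1 y u - chan 0 y u"
  have "chan \<alpha> y u = c0 + \<alpha> * c1" for \<alpha>
    unfolding c0_def c1_def by (simp add: chan_def)
  then show ?thesis
    by (simp only:) (intro continuous_intros)
qed

lemma continuous_on_inner_obj:
  assumes "\<And>z. continuous_on T (\<lambda>t. joint (p t) (a t) z)"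
    "\<And>t z. t \<in> T \<Longrightarrow> z \<in> SS \<Longrightarrow> joint (p t) (a t) z \<ge> 0"
  shows "continuous_on T (\<lambda>t. inner_obj C1 C2 (p t) (a t))"
  unfolding inner_obj_def Let_def cmi_def mi_def
  by (intro continuous_intros continuous_on_ent finite_SS assms) auto

lemma bdd_below_inner_obj:
  assumes "is_pmf2 q"
  shows "bdd_below (inner_obj C1 C2 q ` {0..1/2})"
proof -
  have "continuous_on {0..1/2} (\<lambda>\<alpha>. inner_obj C1 C2 q \<alpha>)"
  proof (rule continuous_on_inner_obj)
    show "continuous_on {0..1/2} (\<lambda>\<alpha>. joint q \<alpha> z)" for z
      by (cases z) (auto simp: joint_def intro!: continuous_intros continuous_on_chan)
  qed (use assms in \<open>auto intro: joint_nonneg\<close>)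
  then show ?thesis
    by (intro bounded_imp_bdd_below compact_imp_bounded compact_continuous_image) auto
qed

lemma obj_le_symmetrize:
  assumes "is_pmf2 q"
  shows "obj C1 C2 q \<le> obj C1 C2 (symmetrize q)"
  unfolding obj_def
proof (rule cINF_mono)
  show "bdd_below (inner_obj C1 C2 q ` {0..1/2})"
    by (rule bdd_below_inner_obj[OF assms])
  show "\<exists>n\<in>{0..1/2}. inner_obj C1 C2 q n \<le> inner_obj C1 C2 (symmetrize q) m" if "m \<in> {0..1/2}" for m
    using that inner_obj_le_symmetrize[OF assms] by (intro bexI[of _ m]) auto
qed simp

lemma obj_cong:
  assumes "\<And>a b. a \<in> {0,1} \<Longrightarrow> b \<in> {0,1} \<Longrightarrow> p a b = q a b"
  shows "obj C1 C2 p = obj C1 C2 q"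
proof -
  have "inner_obj C1 C2 p \<alpha> = inner_obj C1 C2 q \<alpha>" for \<alpha>
  proof -
    have same: "joint p \<alpha> z = joint q \<alpha> z" if "z \<in> SS" for z
      using that assms by (auto simp: SS_def joint_def)
    show ?thesis
      unfolding inner_obj_def Let_def cmi_def mi_def
      by (simp only: ent_cong[where S=SS and P="joint p \<alpha>" and Q="joint q \<alpha>", OF same])
  qed
  then show ?thesis
    unfolding obj_def by simp
qed

definition dsbs_pmf :: "real \<Rightarrow> nat \<Rightarrow> nat \<Rightarrow> real" where
  "dsbs_pmf r a b = (if a = b then (1 - r) / 2 else r / 2)"

lemma is_pmf2_dsbs_pmf: "r \<in> {0..1} \<Longrightarrow> is_pmf2 (dsbs_pmf r)"
  by (auto simp: is_pmf2_def dsbs_pmf_def)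

lemma dsbs_dsbs_pmf: "dsbs (dsbs_pmf r)"
  by (auto simp: dsbs_def dsbs_pmf_def)

lemma continuous_on_dsbs_pmf: "continuous_on T (\<lambda>r. dsbs_pmf r a b)"
  by (cases "a = b") (auto simp: dsbs_pmf_def intro!: continuous_intros)

lemma obj_symmetrize_eq_dsbs_pmf:
  assumes "is_pmf2 p"
  shows "obj C1 C2 (symmetrize p) = obj C1 C2 (dsbs_pmf (p 0 1 + p 1 0))"
  using assms by (intro obj_cong) (auto simp: is_pmf2_def symmetrize_def flip_pmf_def dsbs_pmf_def field_simps)

lemma obj_dsbs_pmf_attains_max:
  "\<exists>r\<in>{0..1}. \<forall>s\<in>{0..1}. obj C1 C2 (dsbs_pmf s) \<le> obj C1 C2 (dsbs_pmf r)"
  unfolding obj_def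
proof (rule compact_attains_sup_INF)
  show "continuous_on {0..1} (\<lambda>r. inner_obj C1 C2 (dsbs_pmf r) \<alpha>)" if "\<alpha> \<in> {0..1/2}" for \<alpha>
  proof (rule continuous_on_inner_obj)
    show "continuous_on {0..1} (\<lambda>r. joint (dsbs_pmf r) \<alpha> z)" for z
      by (cases z) (auto simp: joint_def intro!: continuous_intros continuous_on_dsbs_pmf)
    show "joint (dsbs_pmf r) \<alpha> z \<ge> 0" if "r \<in> {0..1}" "z \<in> SS" for r z
      using that \<open>\<alpha> \<in> {0..1/2}\<close> by (intro joint_nonneg is_pmf2_dsbs_pmf) auto
  qed
  show "bdd_below ((\<lambda>\<alpha>. inner_obj C1 C2 (dsbs_pmf r) \<alpha>) ` {0..1/2})" if "r \<in> {0..1}" for r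
    using bdd_below_inner_obj[OF is_pmf2_dsbs_pmf[OF that]] by simp
qed auto

theorem lemma2:
  fixes C1 C2 :: real
  assumes "C1 \<ge> 0" and "C2 \<ge> 0"
  shows "\<exists>p. is_pmf2 p \<and> dsbs p \<and> (\<forall>q. is_pmf2 q \<longrightarrow> obj C1 C2 q \<le> obj C1 C2 p)"
proof -
  obtain r where r: "r \<in> {0..1}" "\<And>s. s \<in> {0..1} \<Longrightarrow> obj C1 C2 (dsbs_pmf s) \<le> obj C1 C2 (dsbs_pmf r)"
    using obj_dsbs_pmf_attains_max by blast
  have "obj C1 C2 q \<le> obj C1 C2 (dsbs_pmf r)" if q: "is_pmf2 q" for q
  proof -
    have "obj C1 C2 q \<le> obj C1 C2 (symmetrize q)"
      by (rule obj_le_symmetrize[OF q])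
    also have "\<dots> = obj C1 C2 (dsbs_pmf (q 0 1 + q 1 0))"
      by (rule obj_symmetrize_eq_dsbs_pmf[OF q])
    also have "\<dots> \<le> obj C1 C2 (dsbs_pmf r)"
      using q by (intro r(2)) (auto simp: is_pmf2_def)
    finally show ?thesis .
  qed
  then show ?thesis
    using is_pmf2_dsbs_pmf[OF r(1)] dsbs_dsbs_pmf by blast
qed

end
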